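(* There is an absolute constant $C>0$ such that for all scalars $\beta>0$ and $n\in\mathbb{N}$ there are vectors $\mathbf{a},\mathbf{u},\mathbf{q}\in\mathbb{R}^{2n+2}$ with $\psi_n(\beta t)=\mathbf{a}^\top[\mathbf{u}t+\mathbf{q}]_+$ for all $t\in\mathbb{R}$, $\mathbf{u}^\top\mathbf{q}=0$, $\|\mathbf{u}\|=1$, and $\|\mathbf{a}\|^2+\|\mathbf{q}\|^2\le C(n^4\beta^2+\beta^{-2})$.
   Context: The sawtooth $\psi_n:\mathbb{R}\to[-1,1]$ is $\psi_n(t)=-2n[t+1]_++2n[t-1]_++4n\sum_{j=1}^n\big((-1)^{j+n+1}[t-\tfrac{2j-1}{2n}]_++(-1)^{j+n}[t+\tfrac{2j-1}{2n}]_+\big)$; $[\cdot]_+$ is the entrywise ReLU. *)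

theory Defs
  imports Complex_Main
begin

definition relu :: "real \<Rightarrow> real" where
  "relu x = max x 0"

definition sawtooth :: "nat \<Rightarrow> real \<Rightarrow> real" where
  "sawtooth n t =
     - 2 * real n * relu (t + 1) + 2 * real n * relu (t - 1)
     + 4 * real n * (\<Sum>j=1..n.
          (-1) ^ (j + n + 1) * relu (t - (2 * real j - 1) / (2 * real n))
        + (-1) ^ (j + n) * relu (t + (2 * real j - 1) / (2 * real n)))"

text \<open>Vectors in R^m are lists of length m; dot product and Euclidean norm.\<close>
definition dotp :: "real list \<Rightarrow> real list \<Rightarrow> real" where
  "dotp x y = (\<Sum>i<length x. x ! i * y ! i)"

definition enorm :: "real list \<Rightarrow> real" where
  "enorm x = sqrt (\<Sum>i<length x. (x ! i)^2)"

definition relu_net :: "real list \<Rightarrow> real list \<Rightarrow> real list \<Rightarrow> real \<Rightarrow> real" where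
  "relu_net a u q t = (\<Sum>i<length a. a ! i * relu (u ! i * t + q ! i))"

end

theory Submission
  imports Defs
begin

text \<open>
  The sawtooth is a ReLU network \<open>\<Sum>\<^sub>i c\<^sub>i [x + b\<^sub>i]\<^sub>+\<close> with m = 2n+2 neurons whose biases come in
  pairs \<open>\<plusminus>\<kappa>\<close> with \<open>\<bar>\<kappa>\<bar> \<le> 1\<close>, so they sum to zero, and whose weights are O(n).
  By positive homogeneity of ReLU a factor \<open>\<beta> \<surd>m\<close> can be moved from the hidden layer to the output
  layer; this leaves the constant unit vector \<open>u = (1/\<surd>m, \<dots>, 1/\<surd>m)\<close>, which is orthogonal to the
  rescaled biases because they sum to zero, and gives \<open>\<parallel>a\<parallel>\<^sup>2 = \<beta>\<^sup>2 m \<Sum>c\<^sub>i\<^sup>2 = O(n\<^sup>4 \<beta>\<^sup>2)\<close> and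
  \<open>\<parallel>q\<parallel>\<^sup>2 = \<Sum>b\<^sub>i\<^sup>2 / (\<beta>\<^sup>2 m) \<le> 1/\<beta>\<^sup>2\<close>.
\<close>

lemma relu_mult_nonneg: "c \<ge> 0 \<Longrightarrow> relu (c * x) = c * relu x"
  unfolding relu_def by (auto simp: max_def mult_le_0_iff zero_le_mult_iff)

lemma relu_net_upt_replicate:
  "relu_net (map a [0..<m]) (replicate m x) (map q [0..<m]) t = (\<Sum>i<m. a i * relu (x * t + q i))"
  by (simp add: relu_net_def)

lemma dotp_replicate_upt: "dotp (replicate m x) (map f [0..<m]) = x * (\<Sum>i<m. f i)"
  by (simp add: dotp_def sum_distrib_left)

lemma enorm_upt_squared: "(enorm (map f [0..<m]))\<^sup>2 = (\<Sum>i<m. (f i)\<^sup>2)"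
  by (simp add: enorm_def sum_nonneg)

lemma enorm_replicate: "enorm (replicate m x) = sqrt (real m) * \<bar>x\<bar>"
  by (simp add: enorm_def real_sqrt_mult)

lemma relu_sum_as_balanced_net:
  fixes c b :: "nat \<Rightarrow> real"
  assumes "\<beta> > 0" "m > 0" and sum_b: "(\<Sum>i<m. b i) = 0"
  shows "\<exists>a u q. length a = m \<and> length u = m \<and> length q = m \<and>
    (\<forall>t. (\<Sum>i<m. c i * relu (\<beta> * t + b i)) = relu_net a u q t) \<and>
    dotp u q = 0 \<and> enorm u = 1 \<and>
    (enorm a)\<^sup>2 = \<beta>\<^sup>2 * real m * (\<Sum>i<m. (c i)\<^sup>2) \<and>
    (enorm q)\<^sup>2 = (\<Sum>i<m. (b i)\<^sup>2) / (\<beta>\<^sup>2 * real m)"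
proof -
  define s where "s = sqrt (real m)"
  have "s > 0" "s\<^sup>2 = real m" using \<open>m > 0\<close> by (simp_all add: s_def)
  define a where "a = map (\<lambda>i. \<beta> * s * c i) [0..<m]"
  define u where "u = replicate m (1 / s)"
  define q where "q = map (\<lambda>i. b i / (\<beta> * s)) [0..<m]"
  have "relu_net a u q t = (\<Sum>i<m. c i * relu (\<beta> * t + b i))" for t
  proof -
    have "relu (1 / s * t + b i / (\<beta> * s)) = relu (\<beta> * t + b i) / (\<beta> * s)" for i
      using relu_mult_nonneg[of "1 / (\<beta> * s)" "\<beta> * t + b i"] \<open>\<beta> > 0\<close> \<open>s > 0\<close>
      by (simp add: field_simps)
    then show ?thesis
      using \<open>\<beta> > 0\<close> \<open>s > 0\<close> by (simp add: a_def u_def q_def relu_net_upt_replicate)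
  qed
  moreover have "dotp u q = 0"
    by (simp add: u_def q_def dotp_replicate_upt flip: sum_divide_distrib, simp add: sum_b)
  moreover have "enorm u = 1"
    using \<open>s > 0\<close> by (simp add: u_def enorm_replicate s_def)
  moreover have "(enorm a)\<^sup>2 = \<beta>\<^sup>2 * real m * (\<Sum>i<m. (c i)\<^sup>2)"
    using \<open>s\<^sup>2 = real m\<close>
    by (simp add: a_def enorm_upt_squared power_mult_distrib sum_distrib_left mult_ac)
  moreover have "(enorm q)\<^sup>2 = (\<Sum>i<m. (b i)\<^sup>2) / (\<beta>\<^sup>2 * real m)"
    using \<open>s\<^sup>2 = real m\<close>
    by (simp add: q_def enorm_upt_squared power_divide power_mult_distrib sum_divide_distrib)
  ultimately show ?thesis
    by (metis a_def u_def q_def length_map length_replicate length_upt diff_zero)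
qed

text \<open>Breakpoints \<open>\<plusminus>\<kappa>\<^sub>k\<close> and slope changes \<open>w\<^sub>k\<close> of the sawtooth; \<open>k = 0\<close> is the pair \<open>\<plusminus>1\<close>.\<close>

definition sawtooth_knot :: "nat \<Rightarrow> nat \<Rightarrow> real" where
  "sawtooth_knot n k = (if k = 0 then 1 else (2 * real k - 1) / (2 * real n))"

definition sawtooth_jump :: "nat \<Rightarrow> nat \<Rightarrow> real" where
  "sawtooth_jump n k = (if k = 0 then 2 * real n else 4 * real n * (-1) ^ (k + n + 1))"

lemma sawtooth_in_pairs:
  "sawtooth n x =
     (\<Sum>k\<le>n. sawtooth_jump n k * (relu (x - sawtooth_knot n k) - relu (x + sawtooth_knot n k)))"
proof -
  have "(\<Sum>k\<le>n. sawtooth_jump n k * (relu (x - sawtooth_knot n k) - relu (x + sawtooth_knot n k)))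
      = 2 * real n * (relu (x - 1) - relu (x + 1))
        + (\<Sum>k=1..n. 4 * real n * (-1) ^ (k + n + 1) *
             (relu (x - (2 * real k - 1) / (2 * real n)) - relu (x + (2 * real k - 1) / (2 * real n))))"
    by (simp add: atMost_atLeast0 sum.atLeast_Suc_atMost sawtooth_jump_def sawtooth_knot_def)
  also have "\<dots> = sawtooth n x"
    by (simp add: sawtooth_def sum_distrib_left algebra_simps)
  finally show ?thesis ..
qed

text \<open>Neuron \<open>2k\<close> is \<open>w\<^sub>k [x - \<kappa>\<^sub>k]\<^sub>+\<close>, neuron \<open>2k+1\<close> is \<open>-w\<^sub>k [x + \<kappa>\<^sub>k]\<^sub>+\<close>.\<close>

definition sawtooth_weight :: "nat \<Rightarrow> nat \<Rightarrow> real" where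
  "sawtooth_weight n i = (-1) ^ i * sawtooth_jump n (i div 2)"

definition sawtooth_bias :: "nat \<Rightarrow> nat \<Rightarrow> real" where
  "sawtooth_bias n i = (-1) ^ Suc i * sawtooth_knot n (i div 2)"

lemma lessThan_double_Suc: "{..<2 * n + 2} = {..Suc (2 * n)}"
  by auto

lemma sawtooth_as_relu_sum:
  "sawtooth n x = (\<Sum>i<2 * n + 2. sawtooth_weight n i * relu (x + sawtooth_bias n i))"
  unfolding lessThan_double_Suc sum.in_pairs_0 sawtooth_in_pairs
  by (simp add: sawtooth_weight_def sawtooth_bias_def algebra_simps)

lemma sum_sawtooth_bias: "(\<Sum>i<2 * n + 2. sawtooth_bias n i) = 0"
  unfolding lessThan_double_Suc sum.in_pairs_0 by (simp add: sawtooth_bias_def)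

lemma abs_sawtooth_knot_le: "k \<le> n \<Longrightarrow> \<bar>sawtooth_knot n k\<bar> \<le> 1"
  by (auto simp: sawtooth_knot_def divide_le_eq)

lemma sum_sawtooth_bias_squared_le: "(\<Sum>i<2 * n + 2. (sawtooth_bias n i)\<^sup>2) \<le> real (2 * n + 2)"
proof -
  have "\<bar>sawtooth_bias n i\<bar> \<le> 1" if "i < 2 * n + 2" for i
    using abs_sawtooth_knot_le[of "i div 2" n] that by (simp add: sawtooth_bias_def abs_mult)
  then have "(sawtooth_bias n i)\<^sup>2 \<le> 1" if "i < 2 * n + 2" for i
    using that by (simp add: abs_le_square_iff[of _ 1, simplified])
  then show ?thesis
    using sum_bounded_above[of "{..<2 * n + 2}" "\<lambda>i. (sawtooth_bias n i)\<^sup>2" 1] by simp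
qed

lemma sum_sawtooth_weight_squared_le:
  "real (2 * n + 2) * (\<Sum>i<2 * n + 2. (sawtooth_weight n i)\<^sup>2) \<le> 256 * real n ^ 4"
proof (cases "n = 0")
  case False
  have "\<bar>sawtooth_weight n i\<bar> \<le> 4 * real n" for i
    by (simp add: sawtooth_weight_def sawtooth_jump_def abs_mult)
  then have "(sawtooth_weight n i)\<^sup>2 \<le> 16 * (real n)\<^sup>2" for i
    using power_mono[of "\<bar>sawtooth_weight n i\<bar>" "4 * real n" 2] by (simp add: power_mult_distrib)
  then have "(\<Sum>i<2 * n + 2. (sawtooth_weight n i)\<^sup>2) \<le> real (2 * n + 2) * (16 * (real n)\<^sup>2)"
    using sum_bounded_above[of "{..<2 * n + 2}" "\<lambda>i. (sawtooth_weight n i)\<^sup>2"] by simp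
  then have "real (2 * n + 2) * (\<Sum>i<2 * n + 2. (sawtooth_weight n i)\<^sup>2)
      \<le> (real (2 * n + 2))\<^sup>2 * (16 * (real n)\<^sup>2)"
    by (simp add: power2_eq_square mult_left_mono mult.assoc)
  also have "\<dots> \<le> (4 * real n)\<^sup>2 * (16 * (real n)\<^sup>2)"
    using False by (intro mult_right_mono power_mono) simp_all
  also have "\<dots> = 256 * real n ^ 4"
    by (simp add: power_mult_distrib flip: power_add)
  finally show ?thesis .
qed (simp add: sawtooth_weight_def sawtooth_jump_def)

theorem lemma11:
  shows "\<exists>C::real. C > 0 \<and>
    (\<forall>(\<beta>::real) (n::nat). \<beta> > 0 \<longrightarrow>
      (\<exists>a u q :: real list.
         length a = 2 * n + 2 \<and> length u = 2 * n + 2 \<and> length q = 2 * n + 2 \<and>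
         (\<forall>t::real. sawtooth n (\<beta> * t) = relu_net a u q t) \<and>
         dotp u q = 0 \<and> enorm u = 1 \<and>
         (enorm a)^2 + (enorm q)^2 \<le> C * (real n ^ 4 * \<beta>^2 + 1 / \<beta>^2)))"
proof (intro exI[of _ 256] conjI allI impI)
  fix \<beta> :: real and n :: nat
  assume "\<beta> > 0"
  let ?m = "2 * n + 2"
  have "0 < ?m"
    by simp
  obtain a u q where lengths: "length a = ?m" "length u = ?m" "length q = ?m"
    and net: "\<forall>t. (\<Sum>i<?m. sawtooth_weight n i * relu (\<beta> * t + sawtooth_bias n i)) = relu_net a u q t"
    and "dotp u q = 0" "enorm u = 1"
    and norm_a: "(enorm a)\<^sup>2 = \<beta>\<^sup>2 * real ?m * (\<Sum>i<?m. (sawtooth_weight n i)\<^sup>2)"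
    and norm_q: "(enorm q)\<^sup>2 = (\<Sum>i<?m. (sawtooth_bias n i)\<^sup>2) / (\<beta>\<^sup>2 * real ?m)"
    using relu_sum_as_balanced_net[OF \<open>\<beta> > 0\<close> \<open>0 < ?m\<close> sum_sawtooth_bias, where c = "sawtooth_weight n"]
    by blast
  have "(enorm a)\<^sup>2 \<le> 256 * real n ^ 4 * \<beta>\<^sup>2"
    using mult_left_mono[OF sum_sawtooth_weight_squared_le[of n] zero_le_power2[of \<beta>]]
    unfolding norm_a by (simp add: mult_ac)
  moreover have "(enorm q)\<^sup>2 \<le> 1 / \<beta>\<^sup>2"
    using sum_sawtooth_bias_squared_le[of n] \<open>\<beta> > 0\<close> unfolding norm_q by (simp add: divide_le_eq)
  moreover have "0 \<le> 1 / \<beta>\<^sup>2"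
    by simp
  ultimately have "(enorm a)\<^sup>2 + (enorm q)\<^sup>2 \<le> 256 * (real n ^ 4 * \<beta>\<^sup>2 + 1 / \<beta>\<^sup>2)"
    unfolding distrib_left by linarith
  then show "\<exists>a u q :: real list.
      length a = ?m \<and> length u = ?m \<and> length q = ?m \<and>
      (\<forall>t::real. sawtooth n (\<beta> * t) = relu_net a u q t) \<and>
      dotp u q = 0 \<and> enorm u = 1 \<and>
      (enorm a)^2 + (enorm q)^2 \<le> 256 * (real n ^ 4 * \<beta>^2 + 1 / \<beta>^2)"
    unfolding sawtooth_as_relu_sum using lengths net \<open>dotp u q = 0\<close> \<open>enorm u = 1\<close> by blast
qed simp

end
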